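(* In the standing setting, let $(\psi,\alpha),(\phi,\beta)\in\mathcal{A}\times\mathcal{B}$ with liftings $\psi^\uparrow,\phi^\uparrow$, and write $d(g)=\psi^\uparrow(g)\phi^\uparrow(g)^{-1}$ and $e(h)=\phi^\uparrow(h)\psi^\uparrow(h)^{-1}$. Then $(G,r)$ and $(G,r')$ are set-theoretic non-degenerate solutions of the Yang--Baxter equation, where for $g,h\in G$ $$r(g,h)=\Big(d(g)\,h\,d(g)^{-1}\,\beta(g^{-1},h)\,\alpha(g,h),\ \ \psi^\uparrow(h)^{-1}\,d(g)\,h^{-1}\,d(g)^{-1}\,g\,\psi^\uparrow(g)\,h\,\psi^\uparrow(g)^{-1}\,\psi^\uparrow(h)\,\beta(g,h)\,\alpha(h^{-1},g)\Big),$$ $$r'(g,h)=\Big(g\,\psi^\uparrow(g)\,h\,\psi^\uparrow(g)^{-1}\,\phi^\uparrow(h)\,g^{-1}\,\phi^\uparrow(h)^{-1}\,\beta(h,g^{-1})\,\alpha(g,h),\ \ e(h)\,g\,e(h)^{-1}\,\beta(h,g)\,\alpha(h^{-1},g)\Big).$$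
   Context: Standing setting: $(G,\cdot)$ is a group, $K$ is a subgroup of $G$ contained in the centre $Z(G)$, and $A$ is a subgroup with $K\le A\le G$ and $A/K$ abelian. Let $\mathcal{A}=\{\psi\in\operatorname{End}(G/K):\psi(G/K)\le A/K\}$. A lifting of $\psi\in\mathcal{A}$ is any set map $\psi^{\uparrow}:G\to A$ with $\psi^{\uparrow}(g)K=\psi(gK)$ for all $g\in G$. Let $\mathcal{B}$ be the set of maps $\alpha:G\times G\to K$ that are bilinear, i.e. $\alpha(gh,k)=\alpha(g,k)\alpha(h,k)$ and $\alpha(g,hk)=\alpha(g,h)\alpha(g,k)$, and satisfy $\alpha(k,g)=\alpha(g,k)=1$ for all $k\in K$, $g\in G$. A set-theoretic solution of the Yang--Baxter equation is a pair $(X,r)$ with $X\neq\emptyset$ and $r:X\times X\to X\times X$, $r(x,y)=(\sigma_x(y),\tau_y(x))$, a bijection satisfying $(r\times\mathrm{id}_X)(\mathrm{id}_X\times r)(r\times\mathrm{id}_X)=(\mathrm{id}_X\times r)(r\times\mathrm{id}_X)(\mathrm{id}_X\times r)$; it is non-degenerate if all $\sigma_x$ and $\tau_x$ are bijective. *)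

theory Defs
  imports "HOL-Algebra.Algebra"
begin

definition r12 :: "('a \<times> 'a \<Rightarrow> 'a \<times> 'a) \<Rightarrow> 'a \<times> 'a \<times> 'a \<Rightarrow> 'a \<times> 'a \<times> 'a" where
  "r12 r = (\<lambda>(x, y, z). (fst (r (x, y)), snd (r (x, y)), z))"

definition r23 :: "('a \<times> 'a \<Rightarrow> 'a \<times> 'a) \<Rightarrow> 'a \<times> 'a \<times> 'a \<Rightarrow> 'a \<times> 'a \<times> 'a" where
  "r23 r = (\<lambda>(x, y, z). (x, fst (r (y, z)), snd (r (y, z))))"

definition ybe_solution :: "'a set \<Rightarrow> ('a \<times> 'a \<Rightarrow> 'a \<times> 'a) \<Rightarrow> bool" where
  "ybe_solution S r \<longleftrightarrow> S \<noteq> {} \<and> bij_betw r (S \<times> S) (S \<times> S) \<and>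
     (\<forall>t \<in> S \<times> S \<times> S. r12 r (r23 r (r12 r t)) = r23 r (r12 r (r23 r t)))"

definition nondegenerate :: "'a set \<Rightarrow> ('a \<times> 'a \<Rightarrow> 'a \<times> 'a) \<Rightarrow> bool" where
  "nondegenerate S r \<longleftrightarrow>
     (\<forall>x \<in> S. bij_betw (\<lambda>y. fst (r (x, y))) S S) \<and>
     (\<forall>y \<in> S. bij_betw (\<lambda>x. snd (r (x, y))) S S)"

definition central_subgroup :: "('a, 'b) monoid_scheme \<Rightarrow> 'a set \<Rightarrow> bool" where
  "central_subgroup G K \<longleftrightarrow> subgroup K G \<and>
     (\<forall>k \<in> K. \<forall>g \<in> carrier G. k \<otimes>\<^bsub>G\<^esub> g = g \<otimes>\<^bsub>G\<^esub> k)"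

definition quot_sub :: "('a, 'b) monoid_scheme \<Rightarrow> 'a set \<Rightarrow> 'a set \<Rightarrow> 'a set set" where
  "quot_sub G K A = (\<lambda>a. K #>\<^bsub>G\<^esub> a) ` A"

definition endA :: "('a, 'b) monoid_scheme \<Rightarrow> 'a set \<Rightarrow> 'a set \<Rightarrow> ('a set \<Rightarrow> 'a set) set" where
  "endA G K A = {\<psi>. \<psi> \<in> hom (G Mod K) (G Mod K) \<and> \<psi> ` carrier (G Mod K) \<subseteq> quot_sub G K A}"

definition lifting :: "('a, 'b) monoid_scheme \<Rightarrow> 'a set \<Rightarrow> 'a set \<Rightarrow> ('a set \<Rightarrow> 'a set) \<Rightarrow> ('a \<Rightarrow> 'a) \<Rightarrow> bool" where
  "lifting G K A \<psi> \<psi>u \<longleftrightarrow> (\<forall>g \<in> carrier G. \<psi>u g \<in> A \<and> K #>\<^bsub>G\<^esub> (\<psi>u g) = \<psi> (K #>\<^bsub>G\<^esub> g))"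

definition bilinB :: "('a, 'b) monoid_scheme \<Rightarrow> 'a set \<Rightarrow> ('a \<Rightarrow> 'a \<Rightarrow> 'a) set" where
  "bilinB G K = {\<alpha>.
     (\<forall>g \<in> carrier G. \<forall>h \<in> carrier G. \<alpha> g h \<in> K) \<and>
     (\<forall>g \<in> carrier G. \<forall>h \<in> carrier G. \<forall>k \<in> carrier G.
        \<alpha> (g \<otimes>\<^bsub>G\<^esub> h) k = \<alpha> g k \<otimes>\<^bsub>G\<^esub> \<alpha> h k \<and>
        \<alpha> g (h \<otimes>\<^bsub>G\<^esub> k) = \<alpha> g h \<otimes>\<^bsub>G\<^esub> \<alpha> g k) \<and>
     (\<forall>k \<in> K. \<forall>g \<in> carrier G. \<alpha> k g = \<one>\<^bsub>G\<^esub> \<and> \<alpha> g k = \<one>\<^bsub>G\<^esub>)}"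

definition ybe_r :: "('a, 'b) monoid_scheme \<Rightarrow> ('a \<Rightarrow> 'a) \<Rightarrow> ('a \<Rightarrow> 'a) \<Rightarrow>
    ('a \<Rightarrow> 'a \<Rightarrow> 'a) \<Rightarrow> ('a \<Rightarrow> 'a \<Rightarrow> 'a) \<Rightarrow> 'a \<times> 'a \<Rightarrow> 'a \<times> 'a" where
  "ybe_r G \<psi>u \<phi>u \<alpha> \<beta> = (\<lambda>(g, h).
     (let d = (\<lambda>x. \<psi>u x \<otimes>\<^bsub>G\<^esub> inv\<^bsub>G\<^esub> (\<phi>u x)) in
      (d g \<otimes>\<^bsub>G\<^esub> h \<otimes>\<^bsub>G\<^esub> inv\<^bsub>G\<^esub> (d g) \<otimes>\<^bsub>G\<^esub> \<beta> (inv\<^bsub>G\<^esub> g) h \<otimes>\<^bsub>G\<^esub> \<alpha> g h,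
       inv\<^bsub>G\<^esub> (\<psi>u h) \<otimes>\<^bsub>G\<^esub> d g \<otimes>\<^bsub>G\<^esub> inv\<^bsub>G\<^esub> h \<otimes>\<^bsub>G\<^esub> inv\<^bsub>G\<^esub> (d g) \<otimes>\<^bsub>G\<^esub> g
         \<otimes>\<^bsub>G\<^esub> \<psi>u g \<otimes>\<^bsub>G\<^esub> h \<otimes>\<^bsub>G\<^esub> inv\<^bsub>G\<^esub> (\<psi>u g) \<otimes>\<^bsub>G\<^esub> \<psi>u h
         \<otimes>\<^bsub>G\<^esub> \<beta> g h \<otimes>\<^bsub>G\<^esub> \<alpha> (inv\<^bsub>G\<^esub> h) g)))"

definition ybe_r' :: "('a, 'b) monoid_scheme \<Rightarrow> ('a \<Rightarrow> 'a) \<Rightarrow> ('a \<Rightarrow> 'a) \<Rightarrow>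
    ('a \<Rightarrow> 'a \<Rightarrow> 'a) \<Rightarrow> ('a \<Rightarrow> 'a \<Rightarrow> 'a) \<Rightarrow> 'a \<times> 'a \<Rightarrow> 'a \<times> 'a" where
  "ybe_r' G \<psi>u \<phi>u \<alpha> \<beta> = (\<lambda>(g, h).
     (let e = (\<lambda>x. \<phi>u x \<otimes>\<^bsub>G\<^esub> inv\<^bsub>G\<^esub> (\<psi>u x)) in
      (g \<otimes>\<^bsub>G\<^esub> \<psi>u g \<otimes>\<^bsub>G\<^esub> h \<otimes>\<^bsub>G\<^esub> inv\<^bsub>G\<^esub> (\<psi>u g) \<otimes>\<^bsub>G\<^esub> \<phi>u h \<otimes>\<^bsub>G\<^esub> inv\<^bsub>G\<^esub> g
         \<otimes>\<^bsub>G\<^esub> inv\<^bsub>G\<^esub> (\<phi>u h) \<otimes>\<^bsub>G\<^esub> \<beta> h (inv\<^bsub>G\<^esub> g) \<otimes>\<^bsub>G\<^esub> \<alpha> g h,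
       e h \<otimes>\<^bsub>G\<^esub> g \<otimes>\<^bsub>G\<^esub> inv\<^bsub>G\<^esub> (e h) \<otimes>\<^bsub>G\<^esub> \<beta> h g \<otimes>\<^bsub>G\<^esub> \<alpha> (inv\<^bsub>G\<^esub> h) g)))"

end

theory Submission
  imports Defs
begin

text \<open>The operations \<open>g + h = g \<phi>\<^sup>\<up>(g) h \<phi>\<^sup>\<up>(g)\<^sup>-\<^sup>1 \<beta>(g, h)\<close> and
  \<open>\<lambda>\<^sub>g(h) = d(g) h d(g)\<^sup>-\<^sup>1 \<beta>(g\<^sup>-\<^sup>1, h) \<alpha>(g, h)\<close> make \<open>G\<close> a skew brace. This works because \<open>K\<close>
  is central and \<open>A/K\<close> is abelian: conjugation by \<open>\<psi>\<^sup>\<up>(g)\<close> or \<open>\<phi>\<^sup>\<up>(g)\<close> only depends on the class of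
  the lifting modulo \<open>K\<close>, so \<open>g \<mapsto>\<close> (conjugation by \<open>\<psi>\<^sup>\<up>(g)\<close>) is an action of \<open>G\<close>, all these
  conjugations commute, and the bilinear corrections in \<open>K\<close> cancel. Every skew brace yields the
  non-degenerate solution \<open>(a, b) \<mapsto> (\<lambda>\<^sub>a b, (\<lambda>\<^sub>a b)\<^sup>-\<^sup>1 \<circ> a \<circ> b)\<close>, and its opposite brace the one
  with first component \<open>(a \<circ> b) - a\<close>. Both \<open>r\<close> and \<open>r'\<close> have these first components and preserve \<open>\<circ>\<close>,
  so they are exactly these two solutions.\<close>

lemma r12_cong:
  assumes "t \<in> S \<times> S \<times> S" and "\<And>a b. a \<in> S \<Longrightarrow> b \<in> S \<Longrightarrow> f (a, b) = g (a, b)"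
  shows "r12 f t = r12 g t"
  using assms by (auto simp: r12_def)

lemma r23_cong:
  assumes "t \<in> S \<times> S \<times> S" and "\<And>a b. a \<in> S \<Longrightarrow> b \<in> S \<Longrightarrow> f (a, b) = g (a, b)"
  shows "r23 f t = r23 g t"
  using assms by (auto simp: r23_def)

lemma r12_closed:
  assumes "g ` (S \<times> S) \<subseteq> S \<times> S" and "t \<in> S \<times> S \<times> S"
  shows "r12 g t \<in> S \<times> S \<times> S"
proof -
  obtain x y z where t: "t = (x, y, z)" "x \<in> S" "y \<in> S" "z \<in> S" using assms(2) by auto
  have "g (x, y) \<in> S \<times> S" using assms(1) t by blast
  then show ?thesis using t by (simp add: r12_def mem_Times_iff)
qed

lemma r23_closed:
  assumes "g ` (S \<times> S) \<subseteq> S \<times> S" and "t \<in> S \<times> S \<times> S"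
  shows "r23 g t \<in> S \<times> S \<times> S"
proof -
  obtain x y z where t: "t = (x, y, z)" "x \<in> S" "y \<in> S" "z \<in> S" using assms(2) by auto
  have "g (y, z) \<in> S \<times> S" using assms(1) t by blast
  then show ?thesis using t by (simp add: r23_def mem_Times_iff)
qed

lemma ybe_solution_cong:
  assumes g: "ybe_solution S g" and eq: "\<And>a b. a \<in> S \<Longrightarrow> b \<in> S \<Longrightarrow> f (a, b) = g (a, b)"
  shows "ybe_solution S f"
proof -
  have bij: "bij_betw g (S \<times> S) (S \<times> S)" using g by (simp add: ybe_solution_def)
  then have into: "g ` (S \<times> S) \<subseteq> S \<times> S" by (simp add: bij_betw_def)
  have "bij_betw f (S \<times> S) (S \<times> S)"
    using bij by (rule bij_betw_cong[THEN iffD1, rotated]) (auto simp: eq)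
  moreover have "r12 f (r23 f (r12 f t)) = r23 f (r12 f (r23 f t))" if t: "t \<in> S \<times> S \<times> S" for t
  proof -
    have "r12 f (r23 f (r12 f t)) = r12 g (r23 g (r12 g t))"
      using t into eq by (simp add: r12_cong[of _ S f g] r23_cong[of _ S f g] r12_closed r23_closed)
    also have "\<dots> = r23 g (r12 g (r23 g t))" using g t unfolding ybe_solution_def by blast
    also have "\<dots> = r23 f (r12 f (r23 f t))"
      using t into eq by (simp add: r12_cong[of _ S f g] r23_cong[of _ S f g] r12_closed r23_closed)
    finally show ?thesis .
  qed
  ultimately show ?thesis using g by (simp add: ybe_solution_def)
qed

lemma nondegenerate_cong:
  assumes "nondegenerate S g" and "\<And>a b. a \<in> S \<Longrightarrow> b \<in> S \<Longrightarrow> f (a, b) = g (a, b)"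
  shows "nondegenerate S f"
  using assms unfolding nondegenerate_def by (metis (mono_tags, lifting) bij_betw_cong)

text \<open>A skew brace, presented by its additive group \<open>(S, add)\<close> and the map \<open>\<lambda>\<close>:
  \<open>lam a\<close> is an automorphism of \<open>(S, add)\<close> with inverse \<open>lam_inv a\<close>, and the multiplication
  \<open>a \<circ> b = a + \<lambda>\<^sub>a b\<close> turns \<open>lam\<close> into an action.\<close>
locale skew_brace =
  fixes S :: "'a set" and add :: "'a \<Rightarrow> 'a \<Rightarrow> 'a" and zero :: 'a and neg :: "'a \<Rightarrow> 'a"
    and lam lam_inv :: "'a \<Rightarrow> 'a \<Rightarrow> 'a"
  assumes add_closed[simp]: "a \<in> S \<Longrightarrow> b \<in> S \<Longrightarrow> add a b \<in> S"
    and zero_closed[simp]: "zero \<in> S"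
    and neg_closed[simp]: "a \<in> S \<Longrightarrow> neg a \<in> S"
    and add_assoc[simp]: "a \<in> S \<Longrightarrow> b \<in> S \<Longrightarrow> c \<in> S \<Longrightarrow> add (add a b) c = add a (add b c)"
    and add_zero_left[simp]: "a \<in> S \<Longrightarrow> add zero a = a"
    and add_zero_right[simp]: "a \<in> S \<Longrightarrow> add a zero = a"
    and add_neg_left[simp]: "a \<in> S \<Longrightarrow> add (neg a) a = zero"
    and add_neg_right[simp]: "a \<in> S \<Longrightarrow> add a (neg a) = zero"
    and lam_closed[simp]: "a \<in> S \<Longrightarrow> b \<in> S \<Longrightarrow> lam a b \<in> S"
    and lam_add: "a \<in> S \<Longrightarrow> x \<in> S \<Longrightarrow> y \<in> S \<Longrightarrow> lam a (add x y) = add (lam a x) (lam a y)"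
    and lam_inv_closed[simp]: "a \<in> S \<Longrightarrow> b \<in> S \<Longrightarrow> lam_inv a b \<in> S"
    and lam_lam_inv[simp]: "a \<in> S \<Longrightarrow> x \<in> S \<Longrightarrow> lam a (lam_inv a x) = x"
    and lam_inv_lam[simp]: "a \<in> S \<Longrightarrow> x \<in> S \<Longrightarrow> lam_inv a (lam a x) = x"
    and lam_add_lam: "a \<in> S \<Longrightarrow> b \<in> S \<Longrightarrow> c \<in> S \<Longrightarrow> lam (add a (lam a b)) c = lam a (lam b c)"
begin

lemma add_neg_cancel_left[simp]: "a \<in> S \<Longrightarrow> b \<in> S \<Longrightarrow> add a (add (neg a) b) = b"
  by (subst add_assoc[symmetric]) simp_all

lemma neg_add_cancel_left[simp]: "a \<in> S \<Longrightarrow> b \<in> S \<Longrightarrow> add (neg a) (add a b) = b"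
  by (subst add_assoc[symmetric]) simp_all

lemma add_left_cancel: "a \<in> S \<Longrightarrow> b \<in> S \<Longrightarrow> c \<in> S \<Longrightarrow> add a b = add a c \<Longrightarrow> b = c"
  by (metis neg_add_cancel_left)

lemma neg_unique: "a \<in> S \<Longrightarrow> b \<in> S \<Longrightarrow> add a b = zero \<Longrightarrow> neg a = b"
  by (metis add_zero_right neg_add_cancel_left neg_closed)

lemma neg_neg[simp]: "a \<in> S \<Longrightarrow> neg (neg a) = a"
  using neg_unique[of "neg a" a] by simp

lemma neg_add: "a \<in> S \<Longrightarrow> b \<in> S \<Longrightarrow> neg (add a b) = add (neg b) (neg a)"
  by (rule neg_unique) auto

lemma lam_zero[simp]: "a \<in> S \<Longrightarrow> lam a zero = zero"
  using lam_add[of a zero zero] add_left_cancel[of "lam a zero" zero "lam a zero"] by simp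

lemma lam_neg: "a \<in> S \<Longrightarrow> x \<in> S \<Longrightarrow> lam a (neg x) = neg (lam a x)"
  using lam_add[of a x "neg x"] neg_unique[of "lam a x" "lam a (neg x)"] by simp

lemma lam_inj: "a \<in> S \<Longrightarrow> x \<in> S \<Longrightarrow> y \<in> S \<Longrightarrow> lam a x = lam a y \<Longrightarrow> x = y"
  by (metis lam_inv_lam)

lemma lam_zero_left[simp]: "x \<in> S \<Longrightarrow> lam zero x = x"
  using lam_add_lam[of zero zero x] lam_inj[of zero "lam zero x" x] by simp

lemma lam_inv_add: "a \<in> S \<Longrightarrow> x \<in> S \<Longrightarrow> y \<in> S \<Longrightarrow> lam_inv a (add x y) = add (lam_inv a x) (lam_inv a y)"
  by (rule lam_inj[of a]) (auto simp: lam_add)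

lemma lam_inv_zero[simp]: "a \<in> S \<Longrightarrow> lam_inv a zero = zero"
  using lam_inv_lam[of a zero] by simp

definition circ :: "'a \<Rightarrow> 'a \<Rightarrow> 'a" where
  "circ a b = add a (lam a b)"

definition circ_inv :: "'a \<Rightarrow> 'a" where
  "circ_inv a = lam_inv a (neg a)"

lemma circ_closed[simp]: "a \<in> S \<Longrightarrow> b \<in> S \<Longrightarrow> circ a b \<in> S"
  by (simp add: circ_def)

lemma circ_inv_closed[simp]: "a \<in> S \<Longrightarrow> circ_inv a \<in> S"
  by (simp add: circ_inv_def)

lemma lam_circ: "a \<in> S \<Longrightarrow> b \<in> S \<Longrightarrow> c \<in> S \<Longrightarrow> lam (circ a b) c = lam a (lam b c)"
  by (simp add: circ_def lam_add_lam)

lemma circ_assoc[simp]: "a \<in> S \<Longrightarrow> b \<in> S \<Longrightarrow> c \<in> S \<Longrightarrow> circ (circ a b) c = circ a (circ b c)"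
  by (simp add: circ_def lam_add_lam lam_add)

lemma circ_zero_left[simp]: "a \<in> S \<Longrightarrow> circ zero a = a"
  by (simp add: circ_def)

lemma circ_zero_right[simp]: "a \<in> S \<Longrightarrow> circ a zero = a"
  by (simp add: circ_def)

lemma circ_circ_inv[simp]: "a \<in> S \<Longrightarrow> circ a (circ_inv a) = zero"
  by (simp add: circ_def circ_inv_def)

lemma lam_circ_inv: "a \<in> S \<Longrightarrow> x \<in> S \<Longrightarrow> lam (circ_inv a) x = lam_inv a x"
  by (metis circ_circ_inv circ_inv_closed lam_circ lam_closed lam_inv_lam lam_zero_left)

lemma circ_inv_circ[simp]: "a \<in> S \<Longrightarrow> circ (circ_inv a) a = zero"
proof -
  assume a: "a \<in> S"
  have "circ (circ_inv a) a = add (lam_inv a (neg a)) (lam_inv a a)"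
    using a by (simp add: circ_def lam_circ_inv) (simp add: circ_inv_def)
  also have "\<dots> = zero" using a by (simp add: lam_inv_add[symmetric])
  finally show ?thesis .
qed

lemma circ_circ_inv_cancel[simp]: "a \<in> S \<Longrightarrow> b \<in> S \<Longrightarrow> circ a (circ (circ_inv a) b) = b"
  by (subst circ_assoc[symmetric]) simp_all

lemma circ_inv_circ_cancel[simp]: "a \<in> S \<Longrightarrow> b \<in> S \<Longrightarrow> circ (circ_inv a) (circ a b) = b"
  by (subst circ_assoc[symmetric]) simp_all

lemma circ_left_cancel: "a \<in> S \<Longrightarrow> b \<in> S \<Longrightarrow> c \<in> S \<Longrightarrow> circ a b = circ a c \<Longrightarrow> b = c"
  by (metis circ_inv_circ_cancel)

lemma circ_inv_unique: "a \<in> S \<Longrightarrow> b \<in> S \<Longrightarrow> circ a b = zero \<Longrightarrow> circ_inv a = b"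
  by (metis circ_inv_circ_cancel circ_inv_closed circ_zero_right)

lemma circ_inv_circ_inv[simp]: "a \<in> S \<Longrightarrow> circ_inv (circ_inv a) = a"
  using circ_inv_unique[of "circ_inv a" a] by simp

lemma circ_inv_circ_distrib: "a \<in> S \<Longrightarrow> b \<in> S \<Longrightarrow> circ_inv (circ a b) = circ (circ_inv b) (circ_inv a)"
  by (rule circ_inv_unique) auto

lemma lam_eq_circ: "a \<in> S \<Longrightarrow> b \<in> S \<Longrightarrow> lam a b = add (neg a) (circ a b)"
  by (simp add: circ_def)

definition tau :: "'a \<Rightarrow> 'a \<Rightarrow> 'a" where
  "tau a b = circ (circ_inv (lam a b)) (circ a b)"

definition brace_solution :: "'a \<times> 'a \<Rightarrow> 'a \<times> 'a" where
  "brace_solution = (\<lambda>(a, b). (lam a b, tau a b))"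

lemma tau_closed[simp]: "a \<in> S \<Longrightarrow> b \<in> S \<Longrightarrow> tau a b \<in> S"
  by (simp add: tau_def)

lemma circ_lam_tau[simp]: "a \<in> S \<Longrightarrow> b \<in> S \<Longrightarrow> circ (lam a b) (tau a b) = circ a b"
  by (simp add: tau_def)

lemma tau_unique: "a \<in> S \<Longrightarrow> b \<in> S \<Longrightarrow> t \<in> S \<Longrightarrow> circ (lam a b) t = circ a b \<Longrightarrow> t = tau a b"
  by (rule circ_left_cancel[of "lam a b"]) simp_all

lemma lam_tau: "a \<in> S \<Longrightarrow> b \<in> S \<Longrightarrow> c \<in> S \<Longrightarrow> lam (tau a b) c = lam_inv (lam a b) (lam a (lam b c))"
  by (simp add: tau_def lam_circ lam_circ_inv)

lemma tau_eq_lam_inv: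
  assumes "a \<in> S" "b \<in> S"
  shows "tau a b = lam_inv (lam a b) (add (neg (lam a b)) (add a (lam a b)))"
proof -
  have "tau a b = add (lam_inv (lam a b) (neg (lam a b))) (lam_inv (lam a b) (circ a b))"
    using assms by (simp add: tau_def circ_def[of "circ_inv _"] lam_circ_inv) (simp add: circ_inv_def)
  then show ?thesis using assms by (simp add: lam_inv_add circ_def)
qed

lemma lam_braid:
  "x \<in> S \<Longrightarrow> y \<in> S \<Longrightarrow> z \<in> S \<Longrightarrow> lam (lam x y) (lam (tau x y) z) = lam x (lam y z)"
  by (simp add: lam_tau)

lemma tau_lam_braid:
  assumes S: "x \<in> S" "y \<in> S" "z \<in> S"
  shows "tau (lam x y) (lam (tau x y) z) = lam (tau x (lam y z)) (tau y z)"
proof -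
  define w where "w = lam x (lam y z)"
  have "tau (lam x y) (lam (tau x y) z) = lam_inv w (add (neg w) (add (lam x y) w))"
    using S by (simp add: tau_eq_lam_inv[of "lam x y" "lam (tau x y) z"] lam_braid w_def)
  also have "\<dots> = lam_inv w (lam x (add (neg (lam y z)) (add y (lam y z))))"
    using S by (simp add: lam_add lam_neg w_def)
  also have "\<dots> = lam (tau x (lam y z)) (tau y z)"
    using S by (simp add: lam_tau tau_eq_lam_inv[of y z] w_def)
  finally show ?thesis .
qed

lemma tau_tau_braid:
  assumes S: "x \<in> S" "y \<in> S" "z \<in> S"
  shows "tau (tau x y) z = tau (tau x (lam y z)) (tau y z)"
proof -
  define w where "w = lam x (lam y z)"
  define m where "m = tau (lam x y) (lam (tau x y) z)"
  \<comment> \<open>Both sides \<open>t\<close> solve \<open>(w \<circ> m) \<circ> t = x \<circ> y \<circ> z\<close>.\<close>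
  have Sm: "w \<in> S" "m \<in> S" using S by (simp_all add: w_def m_def)
  have "w = lam (lam x y) (lam (tau x y) z)" using S by (simp add: w_def lam_braid)
  then have wm: "circ w m = circ (lam x y) (lam (tau x y) z)" using S by (simp add: m_def)
  have m: "m = lam (tau x (lam y z)) (tau y z)" using S by (simp add: m_def tau_lam_braid)
  have "circ (circ w m) (tau (tau x y) z) = circ (lam x y) (circ (tau x y) z)"
    using S by (simp add: wm)
  also have "\<dots> = circ x (circ y z)" using S by (subst circ_assoc[symmetric]) simp_all
  finally have lhs: "circ (circ w m) (tau (tau x y) z) = circ x (circ y z)" .
  have "circ (circ w m) (tau (tau x (lam y z)) (tau y z)) = circ w (circ (tau x (lam y z)) (tau y z))"
    using S Sm by (simp add: m)
  also have "\<dots> = circ x (circ y z)"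
    using S Sm by (subst circ_assoc[symmetric]) (simp_all add: w_def)
  finally have rhs: "circ (circ w m) (tau (tau x (lam y z)) (tau y z)) = circ x (circ y z)" .
  show ?thesis
    by (rule circ_left_cancel[OF _ _ _ trans[OF lhs rhs[symmetric]]]) (use S Sm in simp_all)
qed

lemma brace_solution_braid:
  assumes "t \<in> S \<times> S \<times> S"
  shows "r12 brace_solution (r23 brace_solution (r12 brace_solution t)) =
    r23 brace_solution (r12 brace_solution (r23 brace_solution t))"
proof -
  obtain x y z where t: "t = (x, y, z)" "x \<in> S" "y \<in> S" "z \<in> S" using assms by auto
  then show ?thesis
    by (simp add: r12_def r23_def brace_solution_def lam_braid tau_lam_braid tau_tau_braid[of x y z])
qed

lemma brace_solution_bij: "bij_betw brace_solution (S \<times> S) (S \<times> S)"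
proof (rule bij_betw_byWitness)
  define inv_map where
    "inv_map = (\<lambda>(u, t). let a = add (circ u t) (neg u) in (a, circ (circ_inv a) (circ u t)))"
  show "\<forall>p \<in> S \<times> S. inv_map (brace_solution p) = p"
  proof
    fix p assume "p \<in> S \<times> S"
    then obtain a b where p: "p = (a, b)" "a \<in> S" "b \<in> S" by blast
    have "add (circ (lam a b) (tau a b)) (neg (lam a b)) = a" using p by simp (simp add: circ_def)
    then show "inv_map (brace_solution p) = p" using p by (simp add: inv_map_def brace_solution_def)
  qed
  show "\<forall>p \<in> S \<times> S. brace_solution (inv_map p) = p"
  proof
    fix p assume "p \<in> S \<times> S"
    then obtain u t where p: "p = (u, t)" "u \<in> S" "t \<in> S" by blast
    define a where "a = add (circ u t) (neg u)"
    define b where "b = circ (circ_inv a) (circ u t)"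
    have ab: "a \<in> S" "b \<in> S" "circ a b = circ u t" using p by (simp_all add: a_def b_def)
    have lam: "lam a b = u" using p ab by (simp add: lam_eq_circ a_def neg_add)
    have "tau a b = t" using p ab lam by (intro tau_unique[symmetric]) simp_all
    then show "brace_solution (inv_map p) = p"
      using p lam by (simp add: inv_map_def brace_solution_def Let_def a_def[symmetric] b_def[symmetric])
  qed
  show "brace_solution ` (S \<times> S) \<subseteq> S \<times> S" by (auto simp: brace_solution_def)
  show "inv_map ` (S \<times> S) \<subseteq> S \<times> S" by (auto simp: inv_map_def Let_def)
qed

lemma ybe_solution_brace_solution: "ybe_solution S brace_solution"
  unfolding ybe_solution_def using zero_closed brace_solution_bij brace_solution_braid by blast

lemma circ_inv_tau:
  assumes ab: "a \<in> S" "b \<in> S"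
  shows "circ_inv (tau a b) = add (circ_inv (circ a b)) (neg (circ_inv b))"
proof -
  define m where "m = circ a b"
  have m: "m \<in> S" using ab by (simp add: m_def)
  have "lam (circ_inv m) a = add (neg (circ_inv m)) (circ_inv b)"
  proof -
    have "lam (circ_inv m) a = neg (lam (circ_inv b) (circ_inv a))"
      using ab by (simp add: m_def circ_inv_circ_distrib lam_circ lam_eq_circ[of "circ_inv a" a] lam_neg)
    also have "\<dots> = add (neg (circ_inv m)) (circ_inv b)"
      using ab by (simp add: lam_eq_circ m_def circ_inv_circ_distrib neg_add)
    finally show ?thesis .
  qed
  moreover have "circ_inv (tau a b) = add (circ_inv m) (lam (circ_inv m) (add (neg a) m))"
    using ab m by (simp add: tau_def circ_inv_circ_distrib circ_def[of "circ_inv m"] lam_eq_circ m_def)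
  moreover have "lam (circ_inv m) m = neg (circ_inv m)" using m by (simp add: lam_eq_circ)
  ultimately show ?thesis
    unfolding m_def[symmetric] using ab m by (simp add: lam_add lam_neg neg_add)
qed

lemma nondegenerate_brace_solution: "nondegenerate S brace_solution"
  unfolding nondegenerate_def
proof (intro conjI ballI)
  fix a assume "a \<in> S"
  then show "bij_betw (\<lambda>y. fst (brace_solution (a, y))) S S"
    by (intro bij_betw_byWitness[where f' = "lam_inv a"]) (auto simp: brace_solution_def)
next
  fix b assume b: "b \<in> S"
  let ?tau_inv = "\<lambda>t. circ (circ_inv (add (circ_inv t) (circ_inv b))) (circ_inv b)"
  have tau_inv: "?tau_inv (tau a b) = a" if "a \<in> S" for a
    using that b by (simp add: circ_inv_tau)
  have inv_tau: "tau (?tau_inv t) b = t" if t: "t \<in> S" for t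
  proof -
    have "circ_inv (tau (?tau_inv t) b) = circ_inv t" using t b by (simp add: circ_inv_tau)
    then have "circ_inv (circ_inv (tau (?tau_inv t) b)) = circ_inv (circ_inv t)" by simp
    then show ?thesis using t b by simp
  qed
  show "bij_betw (\<lambda>x. snd (brace_solution (x, b))) S S"
    by (rule bij_betw_byWitness[where f' = ?tau_inv]) (auto simp: brace_solution_def tau_inv inv_tau b)
qed

theorem solution_of_lam_circ:
  assumes fst_f: "\<And>a b. a \<in> S \<Longrightarrow> b \<in> S \<Longrightarrow> fst (f (a, b)) = lam a b"
    and snd_f: "\<And>a b. a \<in> S \<Longrightarrow> b \<in> S \<Longrightarrow> snd (f (a, b)) \<in> S"
    and circ_f: "\<And>a b. a \<in> S \<Longrightarrow> b \<in> S \<Longrightarrow> circ (fst (f (a, b))) (snd (f (a, b))) = circ a b"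
  shows "ybe_solution S f \<and> nondegenerate S f"
proof -
  have "f (a, b) = brace_solution (a, b)" if "a \<in> S" "b \<in> S" for a b
    using that fst_f snd_f circ_f tau_unique by (simp add: brace_solution_def prod_eq_iff)
  then show ?thesis
    using ybe_solution_cong[OF ybe_solution_brace_solution] nondegenerate_cong[OF nondegenerate_brace_solution]
    by blast
qed

definition lam_op :: "'a \<Rightarrow> 'a \<Rightarrow> 'a" where
  "lam_op a b = add (circ a b) (neg a)"

definition lam_op_inv :: "'a \<Rightarrow> 'a \<Rightarrow> 'a" where
  "lam_op_inv a x = lam_inv a (add (add (neg a) x) a)"

lemma opposite_skew_brace: "skew_brace S (\<lambda>x y. add y x) zero neg lam_op lam_op_inv"
proof
  fix a b c x y
  assume a: "a \<in> S"
  show "lam_op (add (lam_op a b) a) c = lam_op a (lam_op b c)" if "b \<in> S" "c \<in> S"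
  proof -
    have "add (lam_op a b) a = circ a b" using a that by (simp add: lam_op_def)
    then show ?thesis using a that by (simp add: lam_op_def circ_def lam_add_lam lam_add lam_neg neg_add)
  qed
qed (auto simp: lam_op_def lam_op_inv_def circ_def lam_add)

lemma circ_opposite:
  "a \<in> S \<Longrightarrow> b \<in> S \<Longrightarrow> skew_brace.circ (\<lambda>x y. add y x) lam_op a b = circ a b"
  by (simp add: skew_brace.circ_def[OF opposite_skew_brace] lam_op_def circ_def)

theorem solution_of_lam_op_circ:
  assumes fst_f: "\<And>a b. a \<in> S \<Longrightarrow> b \<in> S \<Longrightarrow> fst (f (a, b)) = add (circ a b) (neg a)"
    and snd_f: "\<And>a b. a \<in> S \<Longrightarrow> b \<in> S \<Longrightarrow> snd (f (a, b)) \<in> S"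
    and circ_f: "\<And>a b. a \<in> S \<Longrightarrow> b \<in> S \<Longrightarrow> circ (fst (f (a, b))) (snd (f (a, b))) = circ a b"
  shows "ybe_solution S f \<and> nondegenerate S f"
proof (rule skew_brace.solution_of_lam_circ[OF opposite_skew_brace])
  fix a b assume ab: "a \<in> S" "b \<in> S"
  show "fst (f (a, b)) = lam_op a b" using fst_f ab by (simp add: lam_op_def)
  show "snd (f (a, b)) \<in> S" using snd_f ab by simp
  show "skew_brace.circ (\<lambda>x y. add y x) lam_op (fst (f (a, b))) (snd (f (a, b))) =
      skew_brace.circ (\<lambda>x y. add y x) lam_op a b"
    using fst_f snd_f circ_f ab by (simp add: circ_opposite)
qed

end

definition conjugate :: "('a, 'b) monoid_scheme \<Rightarrow> 'a \<Rightarrow> 'a \<Rightarrow> 'a" where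
  "conjugate G x h = x \<otimes>\<^bsub>G\<^esub> h \<otimes>\<^bsub>G\<^esub> inv\<^bsub>G\<^esub> x"

context group begin

lemma mult_inv_cancel_left[simp]: "x \<in> carrier G \<Longrightarrow> y \<in> carrier G \<Longrightarrow> x \<otimes> (inv x \<otimes> y) = y"
  by (simp add: m_assoc[symmetric])

lemma inv_mult_cancel_left[simp]: "x \<in> carrier G \<Longrightarrow> y \<in> carrier G \<Longrightarrow> inv x \<otimes> (x \<otimes> y) = y"
  by (simp add: m_assoc[symmetric])

lemma conjugate_closed[simp]: "x \<in> carrier G \<Longrightarrow> h \<in> carrier G \<Longrightarrow> conjugate G x h \<in> carrier G"
  by (simp add: conjugate_def)

lemma conjugate_mult:
  "x \<in> carrier G \<Longrightarrow> h \<in> carrier G \<Longrightarrow> k \<in> carrier G \<Longrightarrow>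
    conjugate G x (h \<otimes> k) = conjugate G x h \<otimes> conjugate G x k"
  by (simp add: conjugate_def m_assoc)

lemma conjugate_inv: "x \<in> carrier G \<Longrightarrow> h \<in> carrier G \<Longrightarrow> conjugate G x (inv h) = inv (conjugate G x h)"
  by (simp add: conjugate_def m_assoc inv_mult_group)

lemma conjugate_conjugate:
  "x \<in> carrier G \<Longrightarrow> y \<in> carrier G \<Longrightarrow> h \<in> carrier G \<Longrightarrow>
    conjugate G x (conjugate G y h) = conjugate G (x \<otimes> y) h"
  by (simp add: conjugate_def m_assoc inv_mult_group)

lemma conjugate_one_left[simp]: "h \<in> carrier G \<Longrightarrow> conjugate G \<one> h = h"
  by (simp add: conjugate_def)

lemma conjugate_one_right[simp]: "x \<in> carrier G \<Longrightarrow> conjugate G x \<one> = \<one>"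
  by (simp add: conjugate_def)

lemma conjugate_inv_conjugate[simp]:
  "x \<in> carrier G \<Longrightarrow> h \<in> carrier G \<Longrightarrow> conjugate G (inv x) (conjugate G x h) = h"
  by (simp add: conjugate_conjugate)

lemma conjugate_conjugate_inv[simp]:
  "x \<in> carrier G \<Longrightarrow> h \<in> carrier G \<Longrightarrow> conjugate G x (conjugate G (inv x) h) = h"
  by (simp add: conjugate_conjugate)

end

locale group_central_subgroup = group G for G (structure) +
  fixes K :: "'a set"
  assumes central_K: "central_subgroup G K"
begin

lemma subgroup_K: "subgroup K G" using central_K unfolding central_subgroup_def by blast

lemma K_carrier[simp]: "k \<in> K \<Longrightarrow> k \<in> carrier G" by (rule subgroup.mem_carrier[OF subgroup_K])

lemma K_central:
  "k \<in> K \<Longrightarrow> g \<in> carrier G \<Longrightarrow> k \<otimes> g = g \<otimes> k"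
  using central_K unfolding central_subgroup_def by blast

lemma K_one[simp]: "\<one> \<in> K" by (rule subgroup.one_closed[OF subgroup_K])

lemma K_mult[simp]: "k \<in> K \<Longrightarrow> l \<in> K \<Longrightarrow> k \<otimes> l \<in> K" by (rule subgroup.m_closed[OF subgroup_K])

lemma K_inv[simp]: "k \<in> K \<Longrightarrow> inv k \<in> K" by (rule subgroup.m_inv_closed[OF subgroup_K])

lemma normal_K: "K \<lhd> G"
proof (rule normalI[OF subgroup_K], intro ballI)
  fix x assume x: "x \<in> carrier G"
  show "K #> x = x <# K" unfolding r_coset_def l_coset_def
    by (rule SUP_cong) (simp_all add: K_central[OF _ x])
qed

lemma rcos_eq_imp_K_mult: "x \<in> carrier G \<Longrightarrow> y \<in> carrier G \<Longrightarrow> K #> x = K #> y \<Longrightarrow> \<exists>k\<in>K. x = k \<otimes> y"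
proof -
  assume xy: "x \<in> carrier G" "y \<in> carrier G" "K #> x = K #> y"
  have "x \<in> K #> y" using rcos_self[OF xy(1) subgroup_K] xy(3) by simp
  then show ?thesis unfolding r_coset_def by auto
qed

lemma conjugate_K[simp]: "k \<in> K \<Longrightarrow> x \<in> carrier G \<Longrightarrow> conjugate G x k = k"
  by (simp add: conjugate_def K_central[symmetric] m_assoc)

lemma conjugate_by_K[simp]: "k \<in> K \<Longrightarrow> h \<in> carrier G \<Longrightarrow> conjugate G k h = h"
  by (simp add: conjugate_def K_central m_assoc)

lemma conjugate_K_mult[simp]:
  "k \<in> K \<Longrightarrow> x \<in> carrier G \<Longrightarrow> h \<in> carrier G \<Longrightarrow> conjugate G (k \<otimes> x) h = conjugate G x h"
  by (simp add: conjugate_conjugate[symmetric])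

lemma conjugate_mult_K[simp]:
  "k \<in> K \<Longrightarrow> x \<in> carrier G \<Longrightarrow> h \<in> carrier G \<Longrightarrow> conjugate G (x \<otimes> k) h = conjugate G x h"
  by (simp add: K_central[symmetric])

lemma K_left_commute: "k \<in> K \<Longrightarrow> a \<in> carrier G \<Longrightarrow> b \<in> carrier G \<Longrightarrow> a \<otimes> (k \<otimes> b) = k \<otimes> (a \<otimes> b)"
proof -
  assume a: "k \<in> K" "a \<in> carrier G" "b \<in> carrier G"
  have "a \<otimes> (k \<otimes> b) = (a \<otimes> k) \<otimes> b" using a by (simp add: m_assoc)
  also have "a \<otimes> k = k \<otimes> a" using a K_central by simp
  finally show ?thesis using a by (simp add: m_assoc)
qed

context
  fixes b assumes b: "b \<in> bilinB G K"
begin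

lemma bilin_K[simp]: "g \<in> carrier G \<Longrightarrow> h \<in> carrier G \<Longrightarrow> b g h \<in> K" using b by (simp add: bilinB_def)

lemma bilin_carrier[simp]: "g \<in> carrier G \<Longrightarrow> h \<in> carrier G \<Longrightarrow> b g h \<in> carrier G" by simp

lemma bilin_mult_left: "g \<in> carrier G \<Longrightarrow> h \<in> carrier G \<Longrightarrow> k \<in> carrier G \<Longrightarrow> b (g \<otimes> h) k = b g k \<otimes> b h k"
  using b by (simp add: bilinB_def)

lemma bilin_mult_right:
  "g \<in> carrier G \<Longrightarrow> h \<in> carrier G \<Longrightarrow> k \<in> carrier G \<Longrightarrow> b g (h \<otimes> k) = b g h \<otimes> b g k"
  using b by (simp add: bilinB_def)

lemma bilin_K_left[simp]: "k \<in> K \<Longrightarrow> g \<in> carrier G \<Longrightarrow> b k g = \<one>" using b by (simp add: bilinB_def)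

lemma bilin_K_right[simp]: "k \<in> K \<Longrightarrow> g \<in> carrier G \<Longrightarrow> b g k = \<one>" using b by (simp add: bilinB_def)

lemma bilin_inv_left: "g \<in> carrier G \<Longrightarrow> h \<in> carrier G \<Longrightarrow> b (inv g) h = inv (b g h)"
proof -
  assume gh: "g \<in> carrier G" "h \<in> carrier G"
  have "b (inv g) h \<otimes> b g h = \<one>" using bilin_mult_left[of "inv g" g h, symmetric] gh by simp
  then show ?thesis using inv_equality[of "b (inv g) h" "b g h"] gh by simp
qed

lemma bilin_inv_right: "g \<in> carrier G \<Longrightarrow> h \<in> carrier G \<Longrightarrow> b g (inv h) = inv (b g h)"
proof -
  assume gh: "g \<in> carrier G" "h \<in> carrier G"
  have "b g (inv h) \<otimes> b g h = \<one>" using bilin_mult_right[of g "inv h" h, symmetric] gh by simp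
  then show ?thesis using inv_equality[of "b g (inv h)" "b g h"] gh by simp
qed

lemma bilin_conjugate_left[simp]:
  "y \<in> carrier G \<Longrightarrow> g \<in> carrier G \<Longrightarrow> h \<in> carrier G \<Longrightarrow> b (conjugate G y g) h = b g h"
proof -
  assume a: "y \<in> carrier G" "g \<in> carrier G" "h \<in> carrier G"
  have "b (conjugate G y g) h = b y h \<otimes> b g h \<otimes> inv (b y h)"
    using a by (simp add: conjugate_def bilin_mult_left bilin_inv_left)
  also have "\<dots> = b g h" using a K_central[of "b y h" "b g h"] by (simp add: m_assoc)
  finally show ?thesis .
qed

lemma bilin_conjugate_right[simp]:
  "y \<in> carrier G \<Longrightarrow> g \<in> carrier G \<Longrightarrow> h \<in> carrier G \<Longrightarrow> b g (conjugate G y h) = b g h"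
proof -
  assume a: "y \<in> carrier G" "g \<in> carrier G" "h \<in> carrier G"
  have "b g (conjugate G y h) = b g y \<otimes> b g h \<otimes> inv (b g y)"
    using a by (simp add: conjugate_def bilin_mult_right bilin_inv_right)
  also have "\<dots> = b g h" using a K_central[of "b g y" "b g h"] by (simp add: m_assoc)
  finally show ?thesis .
qed
end

text \<open>Rewriting with \<open>K_pull[of k]\<close> moves the central factor \<open>k\<close> to the front of a product;
  chains of such rewrites normalise the products of corrections in \<open>K\<close> below.\<close>
lemmas K_pull = K_left_commute K_central[symmetric]

lemma bilinB_inv: assumes b: "b \<in> bilinB G K" shows "(\<lambda>g h. b (inv g) h) \<in> bilinB G K"
  unfolding bilinB_def
proof (intro CollectI conjI ballI)
  fix g h k assume a: "g \<in> carrier G" "h \<in> carrier G" "k \<in> carrier G"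
  show "b (inv (g \<otimes> h)) k = b (inv g) k \<otimes> b (inv h) k"
    using a b by (simp add: inv_mult_group bilin_mult_left K_central)
  show "b (inv g) (h \<otimes> k) = b (inv g) h \<otimes> b (inv g) k" using a b by (simp add: bilin_mult_right)
next
  fix g h assume a: "g \<in> carrier G" "h \<in> carrier G"
  show "b (inv g) h \<in> K" using a b by simp
next
  fix k g assume a: "k \<in> K" "g \<in> carrier G"
  show "b (inv k) g = \<one>" using a b by simp
  show "b (inv g) k = \<one>" using a b by simp
qed

lemma bilinB_mult: assumes b: "b \<in> bilinB G K" and c: "c \<in> bilinB G K"
  shows "(\<lambda>g h. b g h \<otimes> c g h) \<in> bilinB G K"
  unfolding bilinB_def
proof (intro CollectI conjI ballI)
  fix g h k assume a: "g \<in> carrier G" "h \<in> carrier G" "k \<in> carrier G"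
  show "b (g \<otimes> h) k \<otimes> c (g \<otimes> h) k = b g k \<otimes> c g k \<otimes> (b h k \<otimes> c h k)"
    using a b c by (simp add: bilin_mult_left m_assoc K_pull[of "c g k"])
  show "b g (h \<otimes> k) \<otimes> c g (h \<otimes> k) = b g h \<otimes> c g h \<otimes> (b g k \<otimes> c g k)"
    using a b c by (simp add: bilin_mult_right m_assoc K_pull[of "c g h"])
next
  fix g h assume a: "g \<in> carrier G" "h \<in> carrier G"
  show "b g h \<otimes> c g h \<in> K" using a b c by simp
next
  fix k g assume a: "k \<in> K" "g \<in> carrier G"
  show "b k g \<otimes> c k g = \<one>" using a b c by simp
  show "b g k \<otimes> c g k = \<one>" using a b c by simp
qed

end

locale ybe_setting = group_central_subgroup G K for G (structure) and K +
  fixes A :: "'a set" and \<psi> \<phi> :: "'a set \<Rightarrow> 'a set" and \<psi>u \<phi>u :: "'a \<Rightarrow> 'a"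
    and \<alpha> \<beta> :: "'a \<Rightarrow> 'a \<Rightarrow> 'a"
  assumes subgroup_A: "subgroup A G"
    and A_mod_K_abelian: "\<forall>a \<in> A. \<forall>b \<in> A. (K #>\<^bsub>G\<^esub> a) \<otimes>\<^bsub>G Mod K\<^esub> (K #>\<^bsub>G\<^esub> b)
                         = (K #>\<^bsub>G\<^esub> b) \<otimes>\<^bsub>G Mod K\<^esub> (K #>\<^bsub>G\<^esub> a)"
    and psi_endA: "\<psi> \<in> endA G K A" and phi_endA: "\<phi> \<in> endA G K A"
    and alpha_bilin: "\<alpha> \<in> bilinB G K" and beta_bilin: "\<beta> \<in> bilinB G K"
    and psi_lifting: "lifting G K A \<psi> \<psi>u" and phi_lifting: "lifting G K A \<phi> \<phi>u"
begin

declare alpha_bilin[simp] beta_bilin[simp]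

lemma A_carrier[simp]: "a \<in> A \<Longrightarrow> a \<in> carrier G" by (rule subgroup.mem_carrier[OF subgroup_A])

lemma A_mult[simp]: "k \<in> A \<Longrightarrow> l \<in> A \<Longrightarrow> k \<otimes> l \<in> A" by (rule subgroup.m_closed[OF subgroup_A])

lemma A_inv[simp]: "k \<in> A \<Longrightarrow> inv k \<in> A" by (rule subgroup.m_inv_closed[OF subgroup_A])

lemma A_commute_mod_K: "a \<in> A \<Longrightarrow> b \<in> A \<Longrightarrow> \<exists>k\<in>K. a \<otimes> b = k \<otimes> (b \<otimes> a)"
proof -
  assume ab: "a \<in> A" "b \<in> A"
  have "K #> (a \<otimes> b) = K #> (b \<otimes> a)"
    using A_mod_K_abelian ab normal.rcos_sum[OF normal_K] by simp
  then show ?thesis using rcos_eq_imp_K_mult ab by simp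
qed

lemma conjugate_A_commute:
  "a \<in> A \<Longrightarrow> b \<in> A \<Longrightarrow> h \<in> carrier G \<Longrightarrow>
    conjugate G a (conjugate G b h) = conjugate G b (conjugate G a h)"
proof -
  assume ab: "a \<in> A" "b \<in> A" "h \<in> carrier G"
  obtain k where k: "k \<in> K" "a \<otimes> b = k \<otimes> (b \<otimes> a)" using A_commute_mod_K ab by blast
  show ?thesis using ab k by (simp add: conjugate_conjugate)
qed

definition hom_mod_K :: "('a \<Rightarrow> 'a) \<Rightarrow> bool" where
  "hom_mod_K u \<longleftrightarrow> (\<forall>g \<in> carrier G. u g \<in> A) \<and>
     (\<forall>g \<in> carrier G. \<forall>h \<in> carrier G. \<exists>k\<in>K. u (g \<otimes> h) = k \<otimes> (u g \<otimes> u h)) \<and> (\<forall>k\<in>K. u k \<in> K)"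

lemma lifting_hom_mod_K: 
  assumes e: "\<chi> \<in> endA G K A" and l: "lifting G K A \<chi> u" shows "hom_mod_K u"
proof -
  have hom: "\<chi> \<in> hom (G Mod K) (G Mod K)" using e by (simp add: endA_def)
  have lf: "\<And>g. g \<in> carrier G \<Longrightarrow> u g \<in> A \<and> K #> u g = \<chi> (K #> g)" using l by (simp add: lifting_def)
  have cos: "\<And>g. g \<in> carrier G \<Longrightarrow> K #> g \<in> carrier (G Mod K)"
    by (simp add: FactGroup_def rcosetsI subgroup_K subgroup.subset)
  have grp: "group (G Mod K)" using normal.factorgroup_is_group[OF normal_K] .
  show ?thesis unfolding hom_mod_K_def
  proof (intro conjI ballI)
    fix g assume "g \<in> carrier G" then show "u g \<in> A" using lf by simp
  next
    fix g h assume gh: "g \<in> carrier G" "h \<in> carrier G"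
    have "K #> u (g \<otimes> h) = \<chi> (K #> (g \<otimes> h))" using lf gh by simp
    also have "K #> (g \<otimes> h) = (K #> g) \<otimes>\<^bsub>G Mod K\<^esub> (K #> h)"
      using normal.rcos_sum[OF normal_K] gh by simp
    also have "\<chi> \<dots> = \<chi> (K #> g) \<otimes>\<^bsub>G Mod K\<^esub> \<chi> (K #> h)" using hom_mult[OF hom cos cos] gh by simp
    also have "\<dots> = K #> (u g \<otimes> u h)"
    proof -
      have "\<chi> (K #> g) = K #> u g" "\<chi> (K #> h) = K #> u h" using lf gh by auto
      then show ?thesis using gh lf normal.rcos_sum[OF normal_K, of "u g" "u h"] by simp
    qed
    finally show "\<exists>k\<in>K. u (g \<otimes> h) = k \<otimes> (u g \<otimes> u h)" using rcos_eq_imp_K_mult gh lf by simp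
  next
    fix k assume k: "k \<in> K"
    have "K #> u k = \<chi> (K #> k)" using lf k by simp
    also have "K #> k = K" using subgroup.rcos_const[OF subgroup_K is_group k] .
    also have "\<chi> K = K" using hom_one[OF hom grp grp] by simp
    finally have "K #> u k = K" .
    then show "u k \<in> K" using rcos_self[OF _ subgroup_K, of "u k"] lf k by simp
  qed
qed

lemma hom_mod_K_psi: "hom_mod_K \<psi>u" using lifting_hom_mod_K[OF psi_endA psi_lifting] .

lemma hom_mod_K_phi: "hom_mod_K \<phi>u" using lifting_hom_mod_K[OF phi_endA phi_lifting] .

definition conj_action :: "('a \<Rightarrow> 'a) \<Rightarrow> bool" where
  "conj_action u \<longleftrightarrow> (\<forall>g \<in> carrier G. u g \<in> A) \<and>
     (\<forall>g \<in> carrier G. \<forall>h \<in> carrier G. \<forall>x \<in> carrier G.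
        conjugate G (u (g \<otimes> h)) x = conjugate G (u g) (conjugate G (u h) x)) \<and>
     (\<forall>k\<in>K. \<forall>x \<in> carrier G. conjugate G (u k) x = x)"

lemma hom_mod_K_conj_action: "hom_mod_K u \<Longrightarrow> conj_action u"
  unfolding conj_action_def
proof (intro conjI ballI)
  assume l: "hom_mod_K u"
  fix g assume "g \<in> carrier G" then show "u g \<in> A" using l by (simp add: hom_mod_K_def)
next
  assume l: "hom_mod_K u"
  fix g h x assume ghx: "g \<in> carrier G" "h \<in> carrier G" "x \<in> carrier G"
  obtain k where k: "k\<in>K" "u (g \<otimes> h) = k \<otimes> (u g \<otimes> u h)" using l ghx unfolding hom_mod_K_def by blast
  have "u g \<in> A" "u h \<in> A" using l ghx by (auto simp: hom_mod_K_def)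
  then show "conjugate G (u (g \<otimes> h)) x = conjugate G (u g) (conjugate G (u h) x)"
    using k ghx by (simp add: conjugate_conjugate)
next
  assume l: "hom_mod_K u"
  fix k x assume "k \<in> K" "x \<in> carrier G"
  then show "conjugate G (u k) x = x" using l by (simp add: hom_mod_K_def)
qed

lemma conj_action_psi[simp]: "conj_action \<psi>u" by (rule hom_mod_K_conj_action[OF hom_mod_K_psi])

lemma conj_action_phi[simp]: "conj_action \<phi>u" by (rule hom_mod_K_conj_action[OF hom_mod_K_phi])

context
  fixes u assumes u: "conj_action u"
begin

lemma conj_action_A[simp]: "g \<in> carrier G \<Longrightarrow> u g \<in> A" using u by (simp add: conj_action_def)

lemma conj_action_carrier[simp]: "g \<in> carrier G \<Longrightarrow> u g \<in> carrier G" by simp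

lemma conj_action_mult:
  "g \<in> carrier G \<Longrightarrow> h \<in> carrier G \<Longrightarrow> x \<in> carrier G \<Longrightarrow>
    conjugate G (u (g \<otimes> h)) x = conjugate G (u g) (conjugate G (u h) x)"
  using u by (simp add: conj_action_def)

lemma conj_action_K[simp]:
  "k \<in> K \<Longrightarrow> x \<in> carrier G \<Longrightarrow> conjugate G (u k) x = x"
  using u by (simp add: conj_action_def)

lemma conj_action_one[simp]: "x \<in> carrier G \<Longrightarrow> conjugate G (u \<one>) x = x" by simp

lemma conj_action_inv_cancel[simp]:
  "g \<in> carrier G \<Longrightarrow> x \<in> carrier G \<Longrightarrow> conjugate G (u (inv g)) (conjugate G (u g) x) = x"
  using conj_action_mult[of "inv g" g x, symmetric] by simp

lemma conj_action_cancel_inv[simp]: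
  "g \<in> carrier G \<Longrightarrow> x \<in> carrier G \<Longrightarrow> conjugate G (u g) (conjugate G (u (inv g)) x) = x"
  using conj_action_mult[of g "inv g" x, symmetric] by simp

lemma conj_action_inv:
  "g \<in> carrier G \<Longrightarrow> x \<in> carrier G \<Longrightarrow> conjugate G (u (inv g)) x = conjugate G (inv (u g)) x"
proof -
  assume gx: "g \<in> carrier G" "x \<in> carrier G"
  have "conjugate G (u (inv g)) x =
      conjugate G (u (inv g)) (conjugate G (u g) (conjugate G (inv (u g)) x))"
    using gx by simp
  also have "\<dots> = conjugate G (inv (u g)) x" using gx by (simp del: conjugate_conjugate_inv)
  finally show ?thesis .
qed

lemma conj_action_K_mult[simp]:
  "k \<in> K \<Longrightarrow> g \<in> carrier G \<Longrightarrow> x \<in> carrier G \<Longrightarrow> conjugate G (u (k \<otimes> g)) x = conjugate G (u g) x"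
  by (simp add: conj_action_mult)

lemma conj_action_mult_K[simp]:
  "k \<in> K \<Longrightarrow> g \<in> carrier G \<Longrightarrow> x \<in> carrier G \<Longrightarrow> conjugate G (u (g \<otimes> k)) x = conjugate G (u g) x"
  by (simp add: conj_action_mult)

end

lemma conj_action_commute:
  "conj_action u \<Longrightarrow> conj_action v \<Longrightarrow> g \<in> carrier G \<Longrightarrow> h \<in> carrier G \<Longrightarrow> x \<in> carrier G \<Longrightarrow>
   conjugate G (u g) (conjugate G (v h) x) = conjugate G (v h) (conjugate G (u g) x)"
  by (rule conjugate_A_commute) simp_all

lemma conj_action_conjugate[simp]: "conj_action u \<Longrightarrow> y \<in> carrier G \<Longrightarrow> g \<in> carrier G \<Longrightarrow> x \<in> carrier G \<Longrightarrow>
   conjugate G (u (conjugate G y g)) x = conjugate G (u g) x"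
proof -
  assume a: "conj_action u" "y \<in> carrier G" "g \<in> carrier G" "x \<in> carrier G"
  have "conjugate G (u (conjugate G y g)) x =
      conjugate G (u y) (conjugate G (u g) (conjugate G (u (inv y)) x))"
    using a unfolding conjugate_def[of G y g] by (simp add: conj_action_mult)
  also have "\<dots> = conjugate G (u g) (conjugate G (u y) (conjugate G (u (inv y)) x))"
    using a by (simp add: conj_action_commute)
  also have "\<dots> = conjugate G (u g) x" using a by simp
  finally show ?thesis .
qed

definition dmap :: "'a \<Rightarrow> 'a" where
  "dmap a = \<psi>u a \<otimes> inv (\<phi>u a)"

definition \<gamma> :: "'a \<Rightarrow> 'a \<Rightarrow> 'a" where
  "\<gamma> a b = \<beta> (inv a) b \<otimes> \<alpha> a b"

text \<open>The skew brace on \<open>G\<close> behind \<open>r\<close> and \<open>r'\<close>: \<open>brace_lam\<close> is the first component of \<open>r\<close>,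
  and the multiplication \<open>brace_circ\<close> works out to \<open>g \<psi>\<^sup>\<up>(g) h \<psi>\<^sup>\<up>(g)\<^sup>-\<^sup>1 \<alpha>(g, h)\<close>.\<close>

definition brace_add :: "'a \<Rightarrow> 'a \<Rightarrow> 'a" where
  "brace_add x y = x \<otimes> conjugate G (\<phi>u x) y \<otimes> \<beta> x y"

definition brace_neg :: "'a \<Rightarrow> 'a" where
  "brace_neg x = conjugate G (\<phi>u (inv x)) (inv x) \<otimes> \<beta> x x"

definition brace_lam :: "'a \<Rightarrow> 'a \<Rightarrow> 'a" where
  "brace_lam a b = conjugate G (dmap a) b \<otimes> \<beta> (inv a) b \<otimes> \<alpha> a b"

definition brace_circ :: "'a \<Rightarrow> 'a \<Rightarrow> 'a" where
  "brace_circ a b = brace_add a (brace_lam a b)"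

lemma gamma_bilinB[simp]: "\<gamma> \<in> bilinB G K"
proof -
  have "(\<lambda>g h. \<beta> (inv g) h \<otimes> \<alpha> g h) \<in> bilinB G K"
    by (rule bilinB_mult[OF bilinB_inv[OF beta_bilin] alpha_bilin])
  then show ?thesis by (simp add: \<gamma>_def[abs_def])
qed

lemma conjugate_dmap:
  "g \<in> carrier G \<Longrightarrow> y \<in> carrier G \<Longrightarrow>
    conjugate G (dmap g) y = conjugate G (\<psi>u g) (conjugate G (\<phi>u (inv g)) y)"
  by (simp add: dmap_def conjugate_conjugate[symmetric] conj_action_inv[OF conj_action_phi])

lemma dmap_A[simp]: "g \<in> carrier G \<Longrightarrow> dmap g \<in> A" by (simp add: dmap_def)

lemma conj_action_dmap[simp]: "conj_action dmap"
  unfolding conj_action_def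
proof (intro conjI ballI)
  fix g assume "g \<in> carrier G" then show "dmap g \<in> A" by simp
next
  fix g h x assume a: "g \<in> carrier G" "h \<in> carrier G" "x \<in> carrier G"
  let ?\<psi> = "\<lambda>g. conjugate G (\<psi>u g)" and ?\<phi> = "\<lambda>g. conjugate G (\<phi>u g)"
  have "conjugate G (dmap (g \<otimes> h)) x = ?\<psi> g (?\<psi> h (?\<phi> (inv h) (?\<phi> (inv g) x)))"
    using a by (simp add: conjugate_dmap inv_mult_group conj_action_mult)
  also have "?\<phi> (inv h) (?\<phi> (inv g) x) = ?\<phi> (inv g) (?\<phi> (inv h) x)"
    using a by (simp add: conj_action_commute)
  also have "?\<psi> h (?\<phi> (inv g) (?\<phi> (inv h) x)) = ?\<phi> (inv g) (?\<psi> h (?\<phi> (inv h) x))"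
    using a by (simp add: conj_action_commute)
  finally show "conjugate G (dmap (g \<otimes> h)) x = conjugate G (dmap g) (conjugate G (dmap h) x)"
    using a by (simp add: conjugate_dmap)
next
  fix k x assume "k \<in> K" "x \<in> carrier G"
  then show "conjugate G (dmap k) x = x" by (simp add: conjugate_dmap)
qed

lemma brace_lam_gamma:
  "a \<in> carrier G \<Longrightarrow> b \<in> carrier G \<Longrightarrow> brace_lam a b = conjugate G (dmap a) b \<otimes> \<gamma> a b"
  by (simp add: brace_lam_def \<gamma>_def m_assoc)

lemma brace_add_closed[simp]: "x \<in> carrier G \<Longrightarrow> y \<in> carrier G \<Longrightarrow> brace_add x y \<in> carrier G"
  by (simp add: brace_add_def)

lemma brace_neg_closed[simp]: "x \<in> carrier G \<Longrightarrow> brace_neg x \<in> carrier G"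
  by (simp add: brace_neg_def)

lemma brace_lam_closed[simp]: "x \<in> carrier G \<Longrightarrow> y \<in> carrier G \<Longrightarrow> brace_lam x y \<in> carrier G"
  by (simp add: brace_lam_def)

lemma conjugate_phi_brace_add: "x \<in> carrier G \<Longrightarrow> y \<in> carrier G \<Longrightarrow> z \<in> carrier G \<Longrightarrow>
   conjugate G (\<phi>u (brace_add x y)) z = conjugate G (\<phi>u x) (conjugate G (\<phi>u y) z)"
  by (simp add: brace_add_def conj_action_mult)

lemma beta_brace_add: "x \<in> carrier G \<Longrightarrow> y \<in> carrier G \<Longrightarrow> z \<in> carrier G \<Longrightarrow>
   \<beta> (brace_add x y) z = \<beta> x z \<otimes> \<beta> y z"
  by (simp add: brace_add_def bilin_mult_left)

lemma brace_add_assoc: "x \<in> carrier G \<Longrightarrow> y \<in> carrier G \<Longrightarrow> z \<in> carrier G \<Longrightarrow>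
   brace_add (brace_add x y) z = brace_add x (brace_add y z)"
proof -
  assume a: "x \<in> carrier G" "y \<in> carrier G" "z \<in> carrier G"
  have "brace_add (brace_add x y) z =
      x \<otimes> conjugate G (\<phi>u x) y \<otimes> \<beta> x y \<otimes> conjugate G (\<phi>u x) (conjugate G (\<phi>u y) z) \<otimes> (\<beta> x z \<otimes> \<beta> y z)"
    using a by (simp add: brace_add_def[of "brace_add x y"] conjugate_phi_brace_add beta_brace_add) (simp add: brace_add_def)
  also have "\<dots> =
      x \<otimes> (conjugate G (\<phi>u x) y \<otimes> conjugate G (\<phi>u x) (conjugate G (\<phi>u y) z) \<otimes> \<beta> y z) \<otimes> (\<beta> x y \<otimes> \<beta> x z)"
    using a by (simp add: m_assoc K_pull[of "\<beta> x y"], simp add: K_pull[of "\<beta> y z"])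
  also have "\<dots> = brace_add x (brace_add y z)"
    using a by (simp add: brace_add_def conjugate_mult bilin_mult_right)
  finally show ?thesis .
qed

lemma brace_add_one_left:
  "a \<in> carrier G \<Longrightarrow> brace_add \<one> a = a"
  by (simp add: brace_add_def)

lemma brace_add_one_right:
  "a \<in> carrier G \<Longrightarrow> brace_add a \<one> = a"
  by (simp add: brace_add_def)

lemma brace_neg_right: "x \<in> carrier G \<Longrightarrow> brace_add x (brace_neg x) = \<one>"
  by (simp add: brace_add_def brace_neg_def conjugate_mult bilin_mult_right bilin_inv_right m_assoc)

lemma brace_neg_left: "x \<in> carrier G \<Longrightarrow> brace_add (brace_neg x) x = \<one>"
proof -
  assume x: "x \<in> carrier G"
  have "brace_add (brace_neg x) x =
      conjugate G (\<phi>u (inv x)) (inv x) \<otimes> \<beta> x x \<otimes> conjugate G (\<phi>u (inv x)) x \<otimes> inv (\<beta> x x)"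
    using x by (simp add: brace_add_def brace_neg_def bilin_mult_left bilin_inv_left)
  also have "\<dots> = \<one>"
    using x by (simp add: m_assoc K_pull[of "\<beta> x x"] conjugate_inv)
  finally show ?thesis .
qed

lemma brace_lam_K_left[simp]: "k \<in> K \<Longrightarrow> c \<in> carrier G \<Longrightarrow> brace_lam k c = c"
  by (simp add: brace_lam_def)

lemma brace_lam_K_right[simp]: "k \<in> K \<Longrightarrow> a \<in> carrier G \<Longrightarrow> brace_lam a k = k"
  by (simp add: brace_lam_def)

lemma brace_lam_one[simp]: "c \<in> carrier G \<Longrightarrow> brace_lam \<one> c = c"
  by simp

lemma brace_lam_mult_action: "a \<in> carrier G \<Longrightarrow> b \<in> carrier G \<Longrightarrow> c \<in> carrier G \<Longrightarrow>
    brace_lam (a \<otimes> b) c = brace_lam a (brace_lam b c)"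
proof -
  assume a: "a \<in> carrier G" "b \<in> carrier G" "c \<in> carrier G"
  have "brace_lam (a \<otimes> b) c = conjugate G (dmap a) (conjugate G (dmap b) c) \<otimes> (\<gamma> a c \<otimes> \<gamma> b c)"
    using a by (simp add: brace_lam_gamma conj_action_mult bilin_mult_left)
  also have "\<dots> = brace_lam a (brace_lam b c)"
    using a by (simp add: brace_lam_gamma conjugate_mult bilin_mult_right m_assoc K_pull[of "\<gamma> b c"])
  finally show ?thesis .
qed

lemma brace_lam_mult_K[simp]:
  "k \<in> K \<Longrightarrow> a \<in> carrier G \<Longrightarrow> c \<in> carrier G \<Longrightarrow> brace_lam (a \<otimes> k) c = brace_lam a c"
  by (simp add: brace_lam_mult_action)

lemma brace_lam_conjugate_left[simp]:
  "z \<in> carrier G \<Longrightarrow> y \<in> carrier G \<Longrightarrow> c \<in> carrier G \<Longrightarrow> brace_lam (conjugate G z y) c = brace_lam y c"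
  by (simp add: brace_lam_gamma)

lemma brace_lam_brace_lam[simp]:
  "a \<in> carrier G \<Longrightarrow> b \<in> carrier G \<Longrightarrow> c \<in> carrier G \<Longrightarrow> brace_lam (brace_lam a b) c = brace_lam b c"
  by (simp add: brace_lam_gamma[of a b])

lemma brace_lam_mult: "a \<in> carrier G \<Longrightarrow> x \<in> carrier G \<Longrightarrow> y \<in> carrier G \<Longrightarrow>
    brace_lam a (x \<otimes> y) = brace_lam a x \<otimes> brace_lam a y"
  by (simp add: brace_lam_gamma conjugate_mult bilin_mult_right m_assoc K_pull[of "\<gamma> a x"])

lemma brace_lam_conjugate_A: "z \<in> A \<Longrightarrow> a \<in> carrier G \<Longrightarrow> y \<in> carrier G \<Longrightarrow>
    brace_lam a (conjugate G z y) = conjugate G z (brace_lam a y)"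
  by (simp add: brace_lam_gamma conjugate_mult conjugate_A_commute[of "dmap a" z])

lemma conj_action_brace_lam[simp]: "conj_action u \<Longrightarrow> a \<in> carrier G \<Longrightarrow> x \<in> carrier G \<Longrightarrow> z \<in> carrier G \<Longrightarrow>
    conjugate G (u (brace_lam a x)) z = conjugate G (u x) z"
  by (simp add: brace_lam_gamma)

lemma bilin_brace_lam_left[simp]: "b \<in> bilinB G K \<Longrightarrow> a \<in> carrier G \<Longrightarrow> x \<in> carrier G \<Longrightarrow> y \<in> carrier G \<Longrightarrow>
    b (brace_lam a x) y = b x y"
  by (simp add: brace_lam_gamma bilin_mult_left)

lemma bilin_brace_lam_right[simp]: "b \<in> bilinB G K \<Longrightarrow> a \<in> carrier G \<Longrightarrow> x \<in> carrier G \<Longrightarrow> y \<in> carrier G \<Longrightarrow>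
    b y (brace_lam a x) = b y x"
  by (simp add: brace_lam_gamma bilin_mult_right)

lemma brace_lam_add: "a \<in> carrier G \<Longrightarrow> x \<in> carrier G \<Longrightarrow> y \<in> carrier G \<Longrightarrow>
    brace_lam a (brace_add x y) = brace_add (brace_lam a x) (brace_lam a y)"
  by (simp add: brace_add_def brace_lam_mult brace_lam_conjugate_A)

lemma brace_lam_circ: "a \<in> carrier G \<Longrightarrow> b \<in> carrier G \<Longrightarrow> c \<in> carrier G \<Longrightarrow>
    brace_lam (brace_circ a b) c = brace_lam a (brace_lam b c)"
  by (simp add: brace_circ_def brace_add_def brace_lam_mult_action)

lemma brace_lam_inv_right: "a \<in> carrier G \<Longrightarrow> x \<in> carrier G \<Longrightarrow> brace_lam a (brace_lam (inv a) x) = x"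
  by (simp add: brace_lam_mult_action[symmetric])

lemma brace_lam_inv_left: "a \<in> carrier G \<Longrightarrow> x \<in> carrier G \<Longrightarrow> brace_lam (inv a) (brace_lam a x) = x"
  by (simp add: brace_lam_mult_action[symmetric])

lemma conjugate_phi_dmap:
  "x \<in> carrier G \<Longrightarrow> y \<in> carrier G \<Longrightarrow>
    conjugate G (\<phi>u x) (conjugate G (dmap x) y) = conjugate G (\<psi>u x) y"
  by (simp add: conjugate_dmap conj_action_commute[of \<phi>u \<psi>u])

lemma brace_circ_eq:
  "x \<in> carrier G \<Longrightarrow> y \<in> carrier G \<Longrightarrow> brace_circ x y = x \<otimes> conjugate G (\<psi>u x) y \<otimes> \<alpha> x y"
proof -
  assume a: "x \<in> carrier G" "y \<in> carrier G"
  have beta_part: "\<beta> x (brace_lam x y) = \<beta> x y" using a by simp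
  have conj_part: "conjugate G (\<phi>u x) (brace_lam x y) = conjugate G (\<psi>u x) y \<otimes> (inv (\<beta> x y) \<otimes> \<alpha> x y)"
    using a by (simp add: brace_lam_def conjugate_mult conjugate_phi_dmap bilin_inv_left m_assoc)
  have "brace_circ x y = x \<otimes> (conjugate G (\<psi>u x) y \<otimes> (inv (\<beta> x y) \<otimes> \<alpha> x y)) \<otimes> \<beta> x y"
    unfolding brace_circ_def brace_add_def beta_part conj_part ..
  also have "\<dots> = x \<otimes> conjugate G (\<psi>u x) y \<otimes> \<alpha> x y"
    using a by (simp add: m_assoc K_pull[of "\<beta> x y"], simp add: K_pull[of "inv (\<beta> x y)"])
  finally show ?thesis .
qed

abbreviation r :: "'a \<times> 'a \<Rightarrow> 'a \<times> 'a" where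
  "r \<equiv> ybe_r G \<psi>u \<phi>u \<alpha> \<beta>"

abbreviation r' :: "'a \<times> 'a \<Rightarrow> 'a \<times> 'a" where
  "r' \<equiv> ybe_r' G \<psi>u \<phi>u \<alpha> \<beta>"

lemma fst_r: "fst (r (g, h)) = brace_lam g h"
  by (simp add: ybe_r_def brace_lam_def dmap_def conjugate_def Let_def)

lemma snd_r_eq: "g \<in> carrier G \<Longrightarrow> h \<in> carrier G \<Longrightarrow>
    snd (r (g, h)) = conjugate G (inv (\<psi>u h)) (conjugate G (dmap g) (inv h) \<otimes> g \<otimes> conjugate G (\<psi>u g) h)
      \<otimes> (\<beta> g h \<otimes> \<alpha> (inv h) g)"
proof -
  assume a: "g \<in> carrier G" "h \<in> carrier G"
  have c: "\<psi>u g \<in> carrier G" "\<psi>u h \<in> carrier G" "\<phi>u g \<in> carrier G" "\<beta> g h \<in> carrier G"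
    "\<alpha> (inv h) g \<in> carrier G" using a by simp_all
  show ?thesis
    unfolding ybe_r_def Let_def conjugate_def dmap_def split snd_conv
    using a c by (simp only: m_assoc m_closed inv_closed inv_inv)
qed

lemma snd_r_closed[simp]: "g \<in> carrier G \<Longrightarrow> h \<in> carrier G \<Longrightarrow> snd (r (g, h)) \<in> carrier G"
  by (simp add: snd_r_eq)

lemma brace_circ_r:
  "g \<in> carrier G \<Longrightarrow> h \<in> carrier G \<Longrightarrow> brace_circ (brace_lam g h) (snd (r (g, h))) = brace_circ g h"
proof -
  assume a: "g \<in> carrier G" "h \<in> carrier G"
  define W where "W = conjugate G (dmap g) (inv h) \<otimes> g \<otimes> conjugate G (\<psi>u g) h"
  have W_carrier: "W \<in> carrier G" using a by (simp add: W_def)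
  have snd_r_W: "snd (r (g, h)) = conjugate G (inv (\<psi>u h)) W \<otimes> (\<beta> g h \<otimes> \<alpha> (inv h) g)"
    using a by (simp add: snd_r_eq W_def)
  have conj_part: "conjugate G (\<psi>u (brace_lam g h)) (snd (r (g, h))) = W \<otimes> (\<beta> g h \<otimes> \<alpha> (inv h) g)"
    using a W_carrier by (simp add: snd_r_W conjugate_mult)
  have alpha_part: "\<alpha> (brace_lam g h) (snd (r (g, h))) = inv (\<alpha> h h) \<otimes> \<alpha> h g \<otimes> \<alpha> h h"
    using a W_carrier by (simp add: snd_r_W bilin_mult_right W_def bilin_inv_right)
  have "brace_circ (brace_lam g h) (snd (r (g, h))) =
     brace_lam g h \<otimes> conjugate G (\<psi>u (brace_lam g h)) (snd (r (g, h))) \<otimes> \<alpha> (brace_lam g h) (snd (r (g, h)))"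
    using a by (intro brace_circ_eq) simp_all
  also have "\<dots> = brace_lam g h \<otimes> (W \<otimes> (\<beta> g h \<otimes> \<alpha> (inv h) g)) \<otimes> (inv (\<alpha> h h) \<otimes> \<alpha> h g \<otimes> \<alpha> h h)"
    unfolding conj_part alpha_part ..
  also have "\<dots> =
     conjugate G (dmap g) h \<otimes> inv (\<beta> g h) \<otimes> \<alpha> g h \<otimes> (W \<otimes> (\<beta> g h \<otimes> inv (\<alpha> h g))) \<otimes> (inv (\<alpha> h h) \<otimes> \<alpha> h g \<otimes> \<alpha> h h)"
    using a by (simp add: brace_lam_def bilin_inv_left)
  also have "\<dots> = \<alpha> g h \<otimes> (g \<otimes> conjugate G (\<psi>u g) h)"
    using a W_carrier unfolding W_def
    by (simp add: m_assoc conjugate_inv,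
        simp add: K_pull[of "inv (\<beta> g h)"], simp add: K_pull[of "\<beta> g h"],
        simp add: K_pull[of "inv (\<alpha> h g)"], simp add: K_pull[of "\<alpha> h g"],
        simp add: K_pull[of "inv (\<alpha> h h)"], simp add: K_pull[of "\<alpha> h h"],
        simp add: K_pull[of "\<alpha> g h"])
  also have "\<dots> = brace_circ g h"
    using a by (simp add: brace_circ_eq m_assoc K_pull[of "\<alpha> g h"])
  finally show ?thesis .
qed

lemma fst_r'_eq: "g \<in> carrier G \<Longrightarrow> h \<in> carrier G \<Longrightarrow>
  fst (r' (g, h)) = g \<otimes> conjugate G (\<psi>u g) h \<otimes> conjugate G (\<phi>u h) (inv g) \<otimes> (\<beta> h (inv g) \<otimes> \<alpha> g h)"
proof -
  assume a: "g \<in> carrier G" "h \<in> carrier G"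
  have c: "\<psi>u g \<in> carrier G" "\<phi>u h \<in> carrier G" "\<beta> h (inv g) \<in> carrier G"
    "\<alpha> g h \<in> carrier G" using a by simp_all
  show ?thesis
    unfolding ybe_r'_def Let_def conjugate_def split fst_conv
    using a c by (simp only: m_assoc m_closed inv_closed inv_inv)
qed

lemma snd_r'_eq_e: "g \<in> carrier G \<Longrightarrow> h \<in> carrier G \<Longrightarrow>
  snd (r' (g, h)) = conjugate G (\<phi>u h \<otimes> inv (\<psi>u h)) g \<otimes> (\<beta> h g \<otimes> \<alpha> (inv h) g)"
proof -
  assume a: "g \<in> carrier G" "h \<in> carrier G"
  have c: "\<psi>u h \<in> carrier G" "\<phi>u h \<in> carrier G" "\<beta> h g \<in> carrier G"
    "\<alpha> (inv h) g \<in> carrier G" using a by simp_all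
  show ?thesis
    unfolding ybe_r'_def Let_def conjugate_def split snd_conv
    using a c by (simp only: m_assoc m_closed inv_closed inv_inv)
qed

lemma snd_r'_eq: "g \<in> carrier G \<Longrightarrow> h \<in> carrier G \<Longrightarrow>
  snd (r' (g, h)) = conjugate G (\<phi>u h) (conjugate G (\<psi>u (inv h)) g) \<otimes> (\<beta> h g \<otimes> \<alpha> (inv h) g)"
  by (simp add: snd_r'_eq_e conjugate_conjugate[symmetric] conj_action_inv[OF conj_action_psi])

lemma fst_r'_closed[simp]: "g \<in> carrier G \<Longrightarrow> h \<in> carrier G \<Longrightarrow> fst (r' (g, h)) \<in> carrier G"
  by (simp add: fst_r'_eq)

lemma snd_r'_closed[simp]: "g \<in> carrier G \<Longrightarrow> h \<in> carrier G \<Longrightarrow> snd (r' (g, h)) \<in> carrier G"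
  by (simp add: snd_r'_eq)

lemma fst_r'_brace:
  "g \<in> carrier G \<Longrightarrow> h \<in> carrier G \<Longrightarrow> fst (r' (g, h)) = brace_add (brace_circ g h) (brace_neg g)"
proof -
  assume a: "g \<in> carrier G" "h \<in> carrier G"
  define m where "m = g \<otimes> conjugate G (\<psi>u g) h \<otimes> \<alpha> g h"
  have m: "brace_circ g h = m" using a by (simp add: brace_circ_eq m_def)
  have conj_part: "conjugate G (\<phi>u m) (brace_neg g) = conjugate G (\<phi>u h) (inv g) \<otimes> \<beta> g g"
    using a by (simp add: m_def brace_neg_def conj_action_mult conjugate_mult conj_action_commute[of \<phi>u \<phi>u g h])
  have beta_part: "\<beta> m (brace_neg g) = inv (\<beta> g g) \<otimes> inv (\<beta> h g)"
    using a by (simp add: m_def brace_neg_def bilin_mult_left bilin_mult_right bilin_inv_right)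
  have "brace_add (brace_circ g h) (brace_neg g) =
      m \<otimes> (conjugate G (\<phi>u h) (inv g) \<otimes> \<beta> g g) \<otimes> (inv (\<beta> g g) \<otimes> inv (\<beta> h g))"
    unfolding m brace_add_def[of m] conj_part beta_part ..
  also have "\<dots> = fst (r' (g, h))"
    using a unfolding m_def
    by (simp add: fst_r'_eq bilin_inv_right m_assoc,
        simp add: K_pull[of "inv (\<beta> g g)"], simp add: K_pull[of "\<beta> g g"],
        simp add: K_pull[of "inv (\<beta> h g)"], simp add: K_pull[of "\<alpha> g h"])
  finally show ?thesis by simp
qed

lemma brace_circ_r':
  "g \<in> carrier G \<Longrightarrow> h \<in> carrier G \<Longrightarrow> brace_circ (fst (r' (g, h))) (snd (r' (g, h))) = brace_circ g h"
proof -
  assume a: "g \<in> carrier G" "h \<in> carrier G"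
  have circ_expand: "brace_circ (fst (r' (g, h))) (snd (r' (g, h))) =
     fst (r' (g, h)) \<otimes> conjugate G (\<psi>u (fst (r' (g, h)))) (snd (r' (g, h))) \<otimes> \<alpha> (fst (r' (g, h))) (snd (r' (g, h)))"
    using a by (intro brace_circ_eq) simp_all
  have conj_psi_fst: "conjugate G (\<psi>u (fst (r' (g, h)))) y = conjugate G (\<psi>u h) y" if y: "y \<in> carrier G" for y
    using a y by (simp add: fst_r'_eq conj_action_mult conj_action_commute[of \<psi>u \<psi>u g h])
  have conj_part: "conjugate G (\<psi>u (fst (r' (g, h)))) (snd (r' (g, h))) =
      conjugate G (\<phi>u h) g \<otimes> (\<beta> h g \<otimes> inv (\<alpha> h g))"
    using a by (simp add: conj_psi_fst snd_r'_eq conjugate_mult conj_action_commute[of \<psi>u \<phi>u h h] bilin_inv_left)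
  have alpha_part: "\<alpha> (fst (r' (g, h))) (snd (r' (g, h))) = \<alpha> g g \<otimes> \<alpha> h g \<otimes> inv (\<alpha> g g)"
  proof -
    have "\<alpha> (fst (r' (g, h))) (snd (r' (g, h))) = \<alpha> (fst (r' (g, h))) g"
      using a by (simp add: snd_r'_eq bilin_mult_right)
    also have "\<dots> = \<alpha> g g \<otimes> \<alpha> h g \<otimes> inv (\<alpha> g g)"
      using a by (simp add: fst_r'_eq bilin_mult_left bilin_inv_left)
    finally show ?thesis .
  qed
  have "brace_circ (fst (r' (g, h))) (snd (r' (g, h))) =
    (g \<otimes> conjugate G (\<psi>u g) h \<otimes> conjugate G (\<phi>u h) (inv g) \<otimes> (\<beta> h (inv g) \<otimes> \<alpha> g h)) \<otimes>
      (conjugate G (\<phi>u h) g \<otimes> (\<beta> h g \<otimes> inv (\<alpha> h g))) \<otimes> (\<alpha> g g \<otimes> \<alpha> h g \<otimes> inv (\<alpha> g g))"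
    unfolding circ_expand conj_part alpha_part using a by (simp add: fst_r'_eq)
  also have "\<dots> = \<alpha> g h \<otimes> (g \<otimes> conjugate G (\<psi>u g) h)"
    using a
    by (simp add: m_assoc conjugate_inv bilin_inv_right,
        simp add: K_pull[of "inv (\<beta> h g)"], simp add: K_pull[of "\<beta> h g"],
        simp add: K_pull[of "inv (\<alpha> h g)"], simp add: K_pull[of "\<alpha> h g"],
        simp add: K_pull[of "inv (\<alpha> g g)"], simp add: K_pull[of "\<alpha> g g"],
        simp add: K_pull[of "\<alpha> g h"])
  also have "\<dots> = brace_circ g h"
    using a by (simp add: brace_circ_eq m_assoc K_pull[of "\<alpha> g h"])
  finally show ?thesis .
qed

lemma skew_brace_G: "skew_brace (carrier G) brace_add \<one> brace_neg brace_lam (\<lambda>a. brace_lam (inv a))"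
  by unfold_locales
    (simp_all add: brace_add_assoc brace_add_one_left brace_add_one_right brace_neg_left brace_neg_right
      brace_lam_add brace_lam_inv_right brace_lam_inv_left brace_lam_circ[unfolded brace_circ_def])

lemma circ_skew_brace_G: "skew_brace.circ brace_add brace_lam = brace_circ"
  by (intro ext) (simp add: skew_brace.circ_def[OF skew_brace_G] brace_circ_def)

lemma r_solution: "ybe_solution (carrier G) r \<and> nondegenerate (carrier G) r"
proof (rule skew_brace.solution_of_lam_circ[OF skew_brace_G])
  fix a b assume "a \<in> carrier G" "b \<in> carrier G"
  then show "fst (r (a, b)) = brace_lam a b" "snd (r (a, b)) \<in> carrier G"
    "skew_brace.circ brace_add brace_lam (fst (r (a, b))) (snd (r (a, b))) =
      skew_brace.circ brace_add brace_lam a b"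
    by (simp_all add: fst_r circ_skew_brace_G brace_circ_r)
qed

lemma r'_solution: "ybe_solution (carrier G) r' \<and> nondegenerate (carrier G) r'"
proof (rule skew_brace.solution_of_lam_op_circ[OF skew_brace_G])
  fix a b assume ab: "a \<in> carrier G" "b \<in> carrier G"
  then show "fst (r' (a, b)) = brace_add (skew_brace.circ brace_add brace_lam a b) (brace_neg a)"
    by (simp add: circ_skew_brace_G fst_r'_brace)
  show "snd (r' (a, b)) \<in> carrier G" using ab by simp
  show "skew_brace.circ brace_add brace_lam (fst (r' (a, b))) (snd (r' (a, b))) =
      skew_brace.circ brace_add brace_lam a b"
    using ab by (simp add: circ_skew_brace_G brace_circ_r')
qed

end

theorem mainTheorem14:
  fixes G :: "('a, 'b) monoid_scheme" and K A :: "'a set"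
    and \<psi> \<phi> :: "'a set \<Rightarrow> 'a set" and \<psi>u \<phi>u :: "'a \<Rightarrow> 'a"
    and \<alpha> \<beta> :: "'a \<Rightarrow> 'a \<Rightarrow> 'a"
  assumes "group G"
    and "central_subgroup G K"
    and "subgroup A G" and "K \<subseteq> A"
    and "\<forall>a \<in> A. \<forall>b \<in> A. (K #>\<^bsub>G\<^esub> a) \<otimes>\<^bsub>G Mod K\<^esub> (K #>\<^bsub>G\<^esub> b)
                         = (K #>\<^bsub>G\<^esub> b) \<otimes>\<^bsub>G Mod K\<^esub> (K #>\<^bsub>G\<^esub> a)"
    and "\<psi> \<in> endA G K A" and "\<phi> \<in> endA G K A"
    and "\<alpha> \<in> bilinB G K" and "\<beta> \<in> bilinB G K"
    and "lifting G K A \<psi> \<psi>u" and "lifting G K A \<phi> \<phi>u"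
  shows "ybe_solution (carrier G) (ybe_r G \<psi>u \<phi>u \<alpha> \<beta>)
         \<and> nondegenerate (carrier G) (ybe_r G \<psi>u \<phi>u \<alpha> \<beta>)
         \<and> ybe_solution (carrier G) (ybe_r' G \<psi>u \<phi>u \<alpha> \<beta>)
         \<and> nondegenerate (carrier G) (ybe_r' G \<psi>u \<phi>u \<alpha> \<beta>)"
proof -
  have central: "group_central_subgroup G K"
    by (intro group_central_subgroup.intro group_central_subgroup_axioms.intro) (fact assms)+
  interpret ybe_setting G K A \<psi> \<phi> \<psi>u \<phi>u \<alpha> \<beta>
    by (intro ybe_setting.intro ybe_setting_axioms.intro central) (fact assms)+
  show ?thesis using r_solution r'_solution by blast
qed

end
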